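(* For each $r\in\{22,24,26\}$ there exists a binary linear $[n,n-r,3]_2 2$ code with $n=53\cdot 2^{r/2-5}-3$, i.e. of lengths $3389$, $6781$, $13565$ respectively. Consequently $\ell_2(22,2)\le 3389$, $\ell_2(24,2)\le 6781$, $\ell_2(26,2)\le 13565$.
   Context: An $[n,n-r,d]_2R$ code is a binary linear code of length $n$, codimension $r$, minimum distance $d$, and covering radius $R$ (the smallest $R$ such that every vector of $\mathbb{F}_2^r$ is a sum of at most $R$ columns of a parity-check matrix). $\ell_2(r,R)$ denotes the smallest length of a binary linear code of codimension $r$ and covering radius $R$. *)

theory Defs
  imports Main
begin

text \<open>Binary vectors of length m are modelled as functions nat => bool (True = 1)
  vanishing outside {..<m}. A parity-check matrix of size r x n is H :: nat => nat => bool,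
  where H i j is the entry in row i (i < r) and column j (j < n).\<close>

definition bvecs :: "nat \<Rightarrow> (nat \<Rightarrow> bool) set" where
  "bvecs m = {v. \<forall>i. m \<le> i \<longrightarrow> \<not> v i}"

definition hamming_weight :: "nat \<Rightarrow> (nat \<Rightarrow> bool) \<Rightarrow> nat" where
  "hamming_weight m v = card {j. j < m \<and> v j}"

definition hamming_dist :: "nat \<Rightarrow> (nat \<Rightarrow> bool) \<Rightarrow> (nat \<Rightarrow> bool) \<Rightarrow> nat" where
  "hamming_dist m u v = card {j. j < m \<and> u j \<noteq> v j}"

definition pc_code :: "nat \<Rightarrow> nat \<Rightarrow> (nat \<Rightarrow> nat \<Rightarrow> bool) \<Rightarrow> (nat \<Rightarrow> bool) set" where
  "pc_code n r H = {c \<in> bvecs n. \<forall>i<r. even (card {j. j < n \<and> H i j \<and> c j})}"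

text \<open>H is an r x n parity-check matrix of a code of length n and codimension r
  (i.e. H has full row rank, equivalently the code has dimension n - r).\<close>
definition is_pc_matrix :: "nat \<Rightarrow> nat \<Rightarrow> (nat \<Rightarrow> nat \<Rightarrow> bool) \<Rightarrow> bool" where
  "is_pc_matrix n r H \<longleftrightarrow> r \<le> n \<and> card (pc_code n r H) = 2 ^ (n - r)"

definition min_dist :: "nat \<Rightarrow> nat \<Rightarrow> (nat \<Rightarrow> nat \<Rightarrow> bool) \<Rightarrow> nat" where
  "min_dist n r H = Min {hamming_dist n c c' | c c'. c \<in> pc_code n r H \<and> c' \<in> pc_code n r H \<and> c \<noteq> c'}"

definition sum_of_cols :: "nat \<Rightarrow> nat \<Rightarrow> (nat \<Rightarrow> nat \<Rightarrow> bool) \<Rightarrow> nat \<Rightarrow> (nat \<Rightarrow> bool) \<Rightarrow> bool" where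
  "sum_of_cols n r H R s \<longleftrightarrow>
     (\<exists>S. S \<subseteq> {..<n} \<and> card S \<le> R \<and> (\<forall>i<r. s i = odd (card {j \<in> S. H i j})))"

definition covering_radius :: "nat \<Rightarrow> nat \<Rightarrow> (nat \<Rightarrow> nat \<Rightarrow> bool) \<Rightarrow> nat" where
  "covering_radius n r H = (LEAST R. \<forall>s \<in> bvecs r. sum_of_cols n r H R s)"

definition ell2 :: "nat \<Rightarrow> nat \<Rightarrow> nat" where
  "ell2 r R = (LEAST n. \<exists>H. is_pc_matrix n r H \<and> covering_radius n r H = R)"

end

(* A set C of nonzero vectors of F_2^r is saturating if every vector of F_2^r is a sum of at most
   two members of C. Taking the members of C as the columns of a parity-check matrix gives a code
   of covering radius 2 as soon as |C| + 1 < 2^r, and of minimum distance 3 if moreover C contains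
   three vectors summing to zero.

   Saturating sets can be doubled. Let B in F_2^t be saturating, let p be an irreducible binary
   polynomial of degree k, so that F_2[x]/(p) is the field GF(2^k), and label the members of B
   injectively by elements l_b of GF(2^k). Then the vectors (b, x, l_b x) for b in B and x in
   GF(2^k), together with the nonzero vectors (0, x, 0), (0, 0, y) and (0, x, x), form a saturating
   set in F_2^(t + 2k) of size |B| 2^k + 3 (2^k - 1). The only nontrivial vectors to cover are
   (b + b', u, v) with b and b' distinct members of B: this is the sum of the vectors at (b, x) and
   (b', u + x) for x = (v + l_b' u) / (l_b + l_b').

   Doubling a saturating set of 50 vectors of F_2^10, certified by an explicit list of
   decompositions, by means of the irreducible polynomials x^6 + x + 1, x^7 + x + 1 and
   x^8 + x^4 + x^3 + x + 1 gives the codes of length 50 * 2^k + 3 (2^k - 1) = 53 * 2^k - 3 and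
   codimension 10 + 2k for k = 6, 7, 8. *)

theory Submission
  imports Defs "HOL-Computational_Algebra.Polynomial_Factorial" "HOL-Library.Z2"
begin

section \<open>Binary vectors\<close>

abbreviation vzero :: "nat \<Rightarrow> bool" where
  "vzero \<equiv> \<lambda>_. False"

definition vadd :: "(nat \<Rightarrow> bool) \<Rightarrow> (nat \<Rightarrow> bool) \<Rightarrow> nat \<Rightarrow> bool" where
  "vadd u v = (\<lambda>i. u i \<noteq> v i)"

lemma vadd_bvecs: "u \<in> bvecs n \<Longrightarrow> v \<in> bvecs n \<Longrightarrow> vadd u v \<in> bvecs n"
  by (simp add: bvecs_def vadd_def)

lemma vadd_self [simp]: "vadd u u = vzero"
  and vadd_vzero [simp]: "vadd u vzero = u" "vadd vzero u = u"
  and vadd_cancel_left [simp]: "vadd u (vadd u v) = v"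
  and vadd_cancel_right [simp]: "vadd (vadd u v) v = u"
  and vadd_eq_vzero_iff: "vadd u v = vzero \<longleftrightarrow> u = v"
  by (auto simp: vadd_def fun_eq_iff)

lemma vadd_bit_xor: "vadd (bit a) (bit b) = bit (xor a b)"
  by (simp add: vadd_def fun_eq_iff bit_xor_iff)

lemma bvecs_eq_image_bit: "bvecs n = (bit :: nat \<Rightarrow> _) ` {..<2 ^ n}"
proof
  show "(bit :: nat \<Rightarrow> _) ` {..<2 ^ n} \<subseteq> bvecs n"
  proof (rule image_subsetI)
    fix m :: nat assume "m \<in> {..<2 ^ n}"
    then have "\<not> bit m i" if "n \<le> i" for i
      using bit_take_bit_iff[of n m i] that by (simp add: take_bit_nat_eq_self)
    then show "bit m \<in> bvecs n" by (simp add: bvecs_def)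
  qed
  show "bvecs n \<subseteq> (bit :: nat \<Rightarrow> _) ` {..<2 ^ n}"
  proof
    fix s assume s: "s \<in> bvecs n"
    define m :: nat where "m = horner_sum of_bool 2 (map s [0..<n])"
    have "s = bit m"
    proof
      fix i show "s i = bit m i"
        using s by (cases "i < n") (simp_all add: m_def bit_horner_sum_bit_iff bvecs_def)
    qed
    moreover have "m < 2 ^ n"
      using horner_sum_of_bool_2_less[of "map s [0..<n]"] by (simp add: m_def)
    ultimately show "s \<in> (bit :: nat \<Rightarrow> _) ` {..<2 ^ n}" by blast
  qed
qed

lemma inj_bit_nat: "inj (bit :: nat \<Rightarrow> _)"
  by (rule injI) (simp add: bit_eq_iff fun_eq_iff)

lemma finite_bvecs [simp]: "finite (bvecs n)"
  by (simp add: bvecs_eq_image_bit)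

lemma card_bvecs: "card (bvecs n) = 2 ^ n"
  unfolding bvecs_eq_image_bit by (simp add: card_image inj_on_subset[OF inj_bit_nat])

section \<open>Codes from saturating sets\<close>

definition col_sum :: "nat \<Rightarrow> (nat \<Rightarrow> nat \<Rightarrow> bool) \<Rightarrow> nat set \<Rightarrow> nat \<Rightarrow> bool" where
  "col_sum r H S = (\<lambda>i. i < r \<and> odd (card {j \<in> S. H i j}))"

definition syndrome :: "nat \<Rightarrow> nat \<Rightarrow> (nat \<Rightarrow> nat \<Rightarrow> bool) \<Rightarrow> (nat \<Rightarrow> bool) \<Rightarrow> nat \<Rightarrow> bool" where
  "syndrome n r H c = col_sum r H {j. j < n \<and> c j}"

lemma col_sum_bvecs: "col_sum r H S \<in> bvecs r"
  by (simp add: col_sum_def bvecs_def)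

lemma col_sum_empty [simp]: "col_sum r H {} = vzero"
  by (simp add: col_sum_def)

lemma odd_card_sym_diff:
  assumes "finite A" "finite B"
  shows "odd (card (sym_diff A B)) \<longleftrightarrow> odd (card A) \<noteq> odd (card B)"
proof -
  have "card A = card (A - B) + card (A \<inter> B)" "card B = card (B - A) + card (A \<inter> B)"
    using assms card_Diff_subset_Int[of A B] card_Diff_subset_Int[of B A]
      card_mono[of A "A \<inter> B"] card_mono[of B "A \<inter> B"]
    by (auto simp: Int_commute)
  moreover have "card (sym_diff A B) = card (A - B) + card (B - A)"
    using assms by (intro card_Un_disjoint) auto
  ultimately show ?thesis by presburger
qed

lemma col_sum_sym_diff:
  assumes "finite S" "finite T"
  shows "col_sum r H (sym_diff S T) = vadd (col_sum r H S) (col_sum r H T)"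
proof
  fix i
  have "{j \<in> sym_diff S T. H i j} = sym_diff {j \<in> S. H i j} {j \<in> T. H i j}" by auto
  then show "col_sum r H (sym_diff S T) i = vadd (col_sum r H S) (col_sum r H T) i"
    using assms odd_card_sym_diff[of "{j \<in> S. H i j}" "{j \<in> T. H i j}"]
    by (auto simp: col_sum_def vadd_def)
qed

lemma col_sum_insert:
  assumes "finite S" "j \<notin> S"
  shows "col_sum r H (insert j S) = vadd (col_sum r H {j}) (col_sum r H S)"
proof -
  have "insert j S = sym_diff {j} S" using assms(2) by auto
  then show ?thesis using assms(1) col_sum_sym_diff[of "{j}" S] by simp
qed

lemma syndrome_vadd: "syndrome n r H (vadd c c') = vadd (syndrome n r H c) (syndrome n r H c')"
proof -
  have "{j. j < n \<and> vadd c c' j} = sym_diff {j. j < n \<and> c j} {j. j < n \<and> c' j}"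
    by (auto simp: vadd_def)
  then show ?thesis by (simp add: syndrome_def col_sum_sym_diff)
qed

lemma syndrome_indicator: "S \<subseteq> {..<n} \<Longrightarrow> syndrome n r H (\<lambda>j. j \<in> S) = col_sum r H S"
  by (auto simp: syndrome_def intro: arg_cong[where f = "col_sum r H"])

lemma indicator_bvecs: "S \<subseteq> {..<n} \<Longrightarrow> (\<lambda>j. j \<in> S) \<in> bvecs n"
  by (auto simp: bvecs_def)

lemma mem_pc_code_iff: "c \<in> pc_code n r H \<longleftrightarrow> c \<in> bvecs n \<and> syndrome n r H c = vzero"
proof -
  have "{j. j < n \<and> H i j \<and> c j} = {j \<in> {j. j < n \<and> c j}. H i j}" for i by auto
  then show ?thesis by (auto simp: pc_code_def syndrome_def col_sum_def fun_eq_iff)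
qed

lemma sum_of_cols_iff:
  assumes "s \<in> bvecs r"
  shows "sum_of_cols n r H R s \<longleftrightarrow> (\<exists>S\<subseteq>{..<n}. card S \<le> R \<and> s = col_sum r H S)"
proof -
  have "(\<forall>i<r. s i = odd (card {j \<in> S. H i j})) \<longleftrightarrow> s = col_sum r H S" for S
  proof
    assume low: "\<forall>i<r. s i = odd (card {j \<in> S. H i j})"
    show "s = col_sum r H S"
    proof
      fix i show "s i = col_sum r H S i"
        using assms low by (cases "i < r") (auto simp: col_sum_def bvecs_def)
    qed
  qed (simp add: col_sum_def)
  then show ?thesis by (simp add: sum_of_cols_def)
qed

lemma card_pc_code_if_col_sums_onto:
  assumes onto: "\<forall>s\<in>bvecs r. \<exists>S\<subseteq>{..<n}. s = col_sum r H S"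
  shows "card (pc_code n r H) * 2 ^ r = 2 ^ n"
proof -
  let ?K = "pc_code n r H"
  have "\<forall>s\<in>bvecs r. \<exists>c\<in>bvecs n. syndrome n r H c = s"
    using onto syndrome_indicator indicator_bvecs by metis
  then obtain g where g: "\<And>s. s \<in> bvecs r \<Longrightarrow> g s \<in> bvecs n \<and> syndrome n r H (g s) = s"
    by metis
  have "bij_betw (\<lambda>(c, s). vadd c (g s)) (?K \<times> bvecs r) (bvecs n)"
  proof (rule bij_betw_imageI)
    show "inj_on (\<lambda>(c, s). vadd c (g s)) (?K \<times> bvecs r)"
    proof (rule inj_onI, clarify)
      fix c s c' s' assume c: "c \<in> ?K" "c' \<in> ?K" and s: "s \<in> bvecs r" "s' \<in> bvecs r"
        and eq: "vadd c (g s) = vadd c' (g s')"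
      have "s = s'"
        using arg_cong[OF eq, of "syndrome n r H"] c s g
        by (simp add: syndrome_vadd mem_pc_code_iff)
      then show "c = c' \<and> s = s'" by (metis eq vadd_cancel_right)
    qed
    show "(\<lambda>(c, s). vadd c (g s)) ` (?K \<times> bvecs r) = bvecs n"
    proof
      show "(\<lambda>(c, s). vadd c (g s)) ` (?K \<times> bvecs r) \<subseteq> bvecs n"
        using g by (auto simp: mem_pc_code_iff vadd_bvecs)
      show "bvecs n \<subseteq> (\<lambda>(c, s). vadd c (g s)) ` (?K \<times> bvecs r)"
      proof
        fix c assume c: "c \<in> bvecs n"
        let ?s = "syndrome n r H c"
        have s: "?s \<in> bvecs r" by (simp add: syndrome_def col_sum_bvecs)
        have "vadd c (g ?s) \<in> ?K"
          using c g[OF s] by (simp add: mem_pc_code_iff vadd_bvecs syndrome_vadd)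
        moreover have "c = vadd (vadd c (g ?s)) (g ?s)" by simp
        ultimately show "c \<in> (\<lambda>(c, s). vadd c (g s)) ` (?K \<times> bvecs r)" using s by force
      qed
    qed
  qed
  then show ?thesis by (metis bij_betw_same_card card_bvecs card_cartesian_product)
qed

lemma is_pc_matrix_if_col_sums_onto:
  assumes "\<forall>s\<in>bvecs r. \<exists>S\<subseteq>{..<n}. s = col_sum r H S"
  shows "is_pc_matrix n r H"
proof -
  let ?K = "pc_code n r H"
  have count: "card ?K * 2 ^ r = 2 ^ n" using assms by (rule card_pc_code_if_col_sums_onto)
  have "vzero \<in> ?K" by (simp add: mem_pc_code_iff bvecs_def syndrome_def)
  moreover have "finite ?K" by (rule finite_subset[of _ "bvecs n"]) (auto simp: mem_pc_code_iff)
  ultimately have "1 \<le> card ?K" by (metis card_0_eq empty_iff less_one not_less)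
  then have "(2::nat) ^ r \<le> 2 ^ n" using count by (metis mult_1 mult_le_mono1)
  then have "r \<le> n" by simp
  then have "2 ^ (n - r) * 2 ^ r = (2::nat) ^ n" by (simp flip: power_add)
  then have "card ?K = 2 ^ (n - r)"
    using count by (metis mult_right_cancel power_not_zero zero_neq_numeral)
  with \<open>r \<le> n\<close> show ?thesis by (simp add: is_pc_matrix_def)
qed

lemma covering_radius_eq_2:
  assumes sums: "\<forall>s\<in>bvecs r. \<exists>S\<subseteq>{..<n}. card S \<le> 2 \<and> s = col_sum r H S"
    and small: "n + 1 < 2 ^ r"
  shows "covering_radius n r H = 2"
  unfolding covering_radius_def
proof (rule Least_equality)
  show "\<forall>s\<in>bvecs r. sum_of_cols n r H 2 s" using sums by (simp add: sum_of_cols_iff)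
next
  fix R assume cover: "\<forall>s\<in>bvecs r. sum_of_cols n r H R s"
  show "2 \<le> R"
  proof (rule ccontr)
    assume "\<not> 2 \<le> R"
    let ?T = "insert {} ((\<lambda>j. {j}) ` {..<n})"
    have "bvecs r \<subseteq> col_sum r H ` ?T"
    proof
      fix s assume s: "s \<in> bvecs r"
      then obtain S where S: "S \<subseteq> {..<n}" "card S \<le> 1" "s = col_sum r H S"
        using cover \<open>\<not> 2 \<le> R\<close> by (fastforce simp: sum_of_cols_iff)
      have "finite S" using S(1) finite_subset by blast
      with S(1,2) have "S \<in> ?T"
        by (cases "card S") (auto simp: card_1_singleton_iff)
      then show "s \<in> col_sum r H ` ?T" using S(3) by blast
    qed
    then have "card (bvecs r) \<le> card (col_sum r H ` ?T)" by (intro card_mono) simp_all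
    also have "\<dots> \<le> card ?T" by (rule card_image_le) simp
    also have "\<dots> \<le> Suc (card ((\<lambda>j. {j}) ` {..<n}))" by (simp add: card_insert_if)
    also have "\<dots> \<le> Suc n" using card_image_le[of "{..<n}" "\<lambda>j. {j}"] by simp
    finally show False using small by (simp add: card_bvecs)
  qed
qed

lemma hamming_dist_pc_code_ge_3:
  assumes no_short: "\<And>S. S \<subseteq> {..<n} \<Longrightarrow> S \<noteq> {} \<Longrightarrow> card S \<le> 2 \<Longrightarrow> col_sum r H S \<noteq> vzero"
    and c: "c \<in> pc_code n r H" "c' \<in> pc_code n r H" "c \<noteq> c'"
  shows "3 \<le> hamming_dist n c c'"
proof -
  let ?W = "{j. j < n \<and> vadd c c' j}"
  have "col_sum r H ?W = vzero"
    using c by (simp add: mem_pc_code_iff syndrome_vadd flip: syndrome_def)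
  moreover have "?W \<noteq> {}"
  proof
    assume "?W = {}"
    then have low: "c i = c' i" if "i < n" for i using that by (auto simp: vadd_def)
    have high: "c i = c' i" if "n \<le> i" for i
      using that c(1,2) by (simp add: mem_pc_code_iff bvecs_def)
    have "c = c'"
    proof
      fix i show "c i = c' i" using low high by (cases "i < n") auto
    qed
    then show False using c(3) by contradiction
  qed
  ultimately have "\<not> card ?W \<le> 2" using no_short[of ?W] by blast
  then show ?thesis by (simp add: hamming_dist_def vadd_def)
qed

lemma min_dist_eq_3:
  assumes no_short: "\<And>S. S \<subseteq> {..<n} \<Longrightarrow> S \<noteq> {} \<Longrightarrow> card S \<le> 2 \<Longrightarrow> col_sum r H S \<noteq> vzero"
    and triangle: "\<exists>S\<subseteq>{..<n}. card S = 3 \<and> col_sum r H S = vzero"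
  shows "min_dist n r H = 3"
proof -
  let ?K = "pc_code n r H"
  let ?D = "{hamming_dist n c c' | c c'. c \<in> ?K \<and> c' \<in> ?K \<and> c \<noteq> c'}"
  have lower: "3 \<le> d" if "d \<in> ?D" for d
    using that hamming_dist_pc_code_ge_3[OF no_short] by blast
  obtain S where S: "S \<subseteq> {..<n}" "card S = 3" "col_sum r H S = vzero" using triangle by blast
  let ?c = "\<lambda>j. j \<in> S"
  have c: "?c \<in> ?K" using S by (simp add: mem_pc_code_iff indicator_bvecs syndrome_indicator)
  have vzero: "vzero \<in> ?K" by (simp add: mem_pc_code_iff bvecs_def syndrome_def)
  obtain x where "x \<in> S" using S(2) by fastforce
  then have "?c \<noteq> vzero" by (auto dest: fun_cong[of _ _ x])
  moreover have "{j. j < n \<and> j \<in> S} = S" using S(1) by auto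
  then have "hamming_dist n ?c vzero = 3" using S(2) by (simp add: hamming_dist_def)
  ultimately have "3 \<in> ?D" using c vzero by force
  moreover have "finite ?D"
  proof (rule finite_subset)
    show "?D \<subseteq> {..n}"
    proof
      fix d assume "d \<in> ?D"
      then obtain c c' where "d = hamming_dist n c c'" by blast
      moreover have "hamming_dist n c c' \<le> card {..<n}"
        unfolding hamming_dist_def by (rule card_mono) auto
      ultimately show "d \<in> {..n}" by simp
    qed
  qed simp
  ultimately show ?thesis unfolding min_dist_def using lower by (intro Min_eqI) auto
qed

definition matrix_of_columns :: "(nat \<Rightarrow> nat \<Rightarrow> bool) \<Rightarrow> nat \<Rightarrow> nat \<Rightarrow> bool" where
  "matrix_of_columns f = (\<lambda>i j. f j i)"

lemma col_sum_singleton: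
  assumes "f j \<in> bvecs r"
  shows "col_sum r (matrix_of_columns f) {j} = f j"
proof
  fix i
  have "{j' \<in> {j}. matrix_of_columns f i j'} = (if f j i then {j} else {})"
    by (auto simp: matrix_of_columns_def)
  then show "col_sum r (matrix_of_columns f) {j} i = f j i"
    using assms by (auto simp: col_sum_def bvecs_def not_less[symmetric])
qed

lemma col_sum_pair:
  assumes "f j \<in> bvecs r" "f j' \<in> bvecs r" "j \<noteq> j'"
  shows "col_sum r (matrix_of_columns f) {j, j'} = vadd (f j) (f j')"
  using assms col_sum_insert[of "{j'}" j r] by (simp add: col_sum_singleton)

text \<open>In projective terms, a saturating set of nonzero vectors is a 1-saturating set of points.\<close>

definition saturating :: "nat \<Rightarrow> (nat \<Rightarrow> bool) set \<Rightarrow> bool" where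
  "saturating r C \<longleftrightarrow> (\<forall>s\<in>bvecs r. s = vzero \<or> s \<in> C \<or> (\<exists>a\<in>C. \<exists>b\<in>C. s = vadd a b))"

lemma col_sums_cover_if_saturating:
  assumes f: "bij_betw f {..<n} C" and C: "C \<subseteq> bvecs r" "saturating r C"
    and s: "s \<in> bvecs r"
  shows "\<exists>S\<subseteq>{..<n}. card S \<le> 2 \<and> s = col_sum r (matrix_of_columns f) S"
proof -
  have f_bvecs: "j < n \<Longrightarrow> f j \<in> bvecs r" for j using f C(1) by (auto simp: bij_betw_def)
  have f_onto: "c \<in> C \<Longrightarrow> \<exists>j<n. c = f j" for c using f by (auto simp: bij_betw_def)
  consider "s = vzero" | j where "j < n" "s = f j"
    | j j' where "j < n" "j' < n" "s = vadd (f j) (f j')"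
    using C(2) s f_onto unfolding saturating_def by metis
  then show ?thesis
  proof cases
    case 1 then show ?thesis by (intro exI[of _ "{}"]) simp
  next
    case (2 j) then show ?thesis by (intro exI[of _ "{j}"]) (simp add: col_sum_singleton f_bvecs)
  next
    case (3 j j')
    show ?thesis
    proof (cases "j = j'")
      case True then show ?thesis using 3 by (intro exI[of _ "{}"]) simp
    next
      case False
      then show ?thesis using 3 by (intro exI[of _ "{j, j'}"]) (simp add: col_sum_pair f_bvecs)
    qed
  qed
qed

lemma card_le_2_cases:
  assumes "finite S" "S \<noteq> {}" "card S \<le> 2"
  obtains j where "S = {j}" | j j' where "j \<noteq> j'" "S = {j, j'}"
proof -
  have "card S = 1 \<or> card S = 2" using assms by (auto simp: le_Suc_eq numeral_2_eq_2)
  then show ?thesis using that by (auto simp: card_1_singleton_iff card_2_iff)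
qed

lemma col_sum_nonzero_if_distinct_nonzero:
  assumes f: "bij_betw f {..<n} C" and C: "C \<subseteq> bvecs r" "vzero \<notin> C"
    and S: "S \<subseteq> {..<n}" "S \<noteq> {}" "card S \<le> 2"
  shows "col_sum r (matrix_of_columns f) S \<noteq> vzero"
proof -
  have f_in: "j < n \<Longrightarrow> f j \<in> C" for j using f by (auto simp: bij_betw_def)
  have "finite S" using S(1) finite_subset by blast
  from this S(2,3) show ?thesis
  proof (cases rule: card_le_2_cases)
    case (1 j) then show ?thesis using f_in C S(1) by (force simp: col_sum_singleton)
  next
    case (2 j j')
    then have "f j \<noteq> f j'" using f S(1) by (auto simp: bij_betw_def dest: inj_onD)
    moreover have "f j \<in> bvecs r" "f j' \<in> bvecs r" using 2 f_in C(1) S(1) by auto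
    ultimately show ?thesis using 2 by (simp add: col_sum_pair vadd_eq_vzero_iff)
  qed
qed

lemma col_sum_vanishing_triple:
  assumes f: "bij_betw f {..<n} C" and C: "C \<subseteq> bvecs r" "vzero \<notin> C"
    and abc: "a \<in> C" "b \<in> C" "vadd a b \<in> C"
  shows "\<exists>S\<subseteq>{..<n}. card S = 3 \<and> col_sum r (matrix_of_columns f) S = vzero"
proof -
  have f_onto: "c \<in> C \<Longrightarrow> \<exists>j<n. c = f j" for c using f by (auto simp: bij_betw_def)
  obtain j1 j2 j3 where j: "j1 < n" "j2 < n" "j3 < n" "a = f j1" "b = f j2" "vadd a b = f j3"
    using f_onto[OF abc(1)] f_onto[OF abc(2)] f_onto[OF abc(3)] by blast
  have "a \<noteq> b" using abc(3) C(2) by auto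
  moreover have "vadd a b \<noteq> a" "vadd a b \<noteq> b"
    using abc(1,2) C(2) by (auto dest: arg_cong[of _ _ "vadd a"] arg_cong[of _ _ "\<lambda>v. vadd v b"])
  ultimately have "j1 \<noteq> j2" "j3 \<noteq> j1" "j3 \<noteq> j2" using j by auto
  then have "card {j3, j1, j2} = 3" by simp
  moreover have "f j1 \<in> bvecs r" "f j2 \<in> bvecs r" "f j3 \<in> bvecs r" using j abc C(1) by auto
  with \<open>j1 \<noteq> j2\<close> \<open>j3 \<noteq> j1\<close> \<open>j3 \<noteq> j2\<close>
  have "col_sum r (matrix_of_columns f) {j3, j1, j2} = vadd (f j3) (vadd (f j1) (f j2))"
    using col_sum_insert[of "{j1, j2}" j3 r "matrix_of_columns f"]
    by (simp add: col_sum_singleton col_sum_pair)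
  ultimately show ?thesis using j by (intro exI[of _ "{j3, j1, j2}"]) auto
qed

lemma code_from_saturating_set:
  assumes C: "finite C" "C \<subseteq> bvecs r" "vzero \<notin> C" "saturating r C"
    and triangle: "\<exists>a\<in>C. \<exists>b\<in>C. vadd a b \<in> C" and small: "card C + 1 < 2 ^ r"
  shows "\<exists>H. is_pc_matrix (card C) r H \<and> min_dist (card C) r H = 3
    \<and> covering_radius (card C) r H = 2"
proof -
  obtain f where f: "bij_betw f {..<card C} C"
    using ex_bij_betw_nat_finite[OF C(1)] by (auto simp: atLeast0LessThan)
  let ?H = "matrix_of_columns f"
  have sums: "\<forall>s\<in>bvecs r. \<exists>S\<subseteq>{..<card C}. card S \<le> 2 \<and> s = col_sum r ?H S"
    using col_sums_cover_if_saturating[OF f C(2,4)] by blast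
  have "min_dist (card C) r ?H = 3"
    using col_sum_nonzero_if_distinct_nonzero[OF f C(2,3)] triangle
      col_sum_vanishing_triple[OF f C(2,3)]
    by (intro min_dist_eq_3) blast+
  moreover have "is_pc_matrix (card C) r ?H"
    using sums by (intro is_pc_matrix_if_col_sums_onto) blast
  moreover have "covering_radius (card C) r ?H = 2" using sums small by (rule covering_radius_eq_2)
  ultimately show ?thesis by blast
qed

section \<open>Binary polynomials\<close>

lemma irreducible_if_no_factor_of_degree_le:
  fixes p :: "'a::field poly"
  assumes "0 < degree p" "degree p \<le> 2 * m"
    and no_factor: "\<And>f. 0 < degree f \<Longrightarrow> degree f \<le> m \<Longrightarrow> \<not> f dvd p"
  shows "irreducible p"
proof (rule irreducibleI)
  show p0: "p \<noteq> 0" using assms(1) by auto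
  then show "\<not> is_unit p" using assms(1) by (simp add: is_unit_iff_degree)
  fix a b assume p: "p = a * b"
  then have "a \<noteq> 0" "b \<noteq> 0" using p0 by auto
  show "is_unit a \<or> is_unit b"
  proof (rule ccontr)
    assume "\<not> (is_unit a \<or> is_unit b)"
    then have "0 < degree a" "0 < degree b"
      using \<open>a \<noteq> 0\<close> \<open>b \<noteq> 0\<close> is_unit_iff_degree by auto
    moreover have "a dvd p" "b dvd p" using p by simp_all
    ultimately have "m < degree a" "m < degree b" using no_factor not_le by blast+
    moreover have "degree p = degree a + degree b"
      using p \<open>a \<noteq> 0\<close> \<open>b \<noteq> 0\<close> by (simp add: degree_mult_eq)
    ultimately show False using assms(2) by linarith
  qed
qed

lemma degree_pos_if_irreducible:
  fixes p :: "'a::field poly"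
  assumes "irreducible p"
  shows "0 < degree p"
proof -
  have "p \<noteq> 0" using assms by auto
  then show ?thesis using irreducible_not_unit[OF assms] by (simp add: is_unit_iff_degree)
qed

lemma bit_poly_two [simp]: "(2 :: bit poly) = 0"
  by (simp add: numeral_poly)

lemma bit_poly_add_self [simp]: "x + x = (0 :: bit poly)"
  by (simp flip: mult_2)

lemma bit_poly_add_cancel [simp]: "x + (x + y) = (y :: bit poly)" "(y + x) + x = (y :: bit poly)"
  by (simp_all flip: add.assoc)

definition vec_of_poly :: "bit poly \<Rightarrow> nat \<Rightarrow> bool" where
  "vec_of_poly x = (\<lambda>j. coeff x j = 1)"

lemma vec_of_poly_0 [simp]: "vec_of_poly 0 = vzero"
  by (simp add: vec_of_poly_def)

lemma vec_of_poly_add: "vec_of_poly (x + y) = vadd (vec_of_poly x) (vec_of_poly y)"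
proof
  fix j show "vec_of_poly (x + y) j = vadd (vec_of_poly x) (vec_of_poly y) j"
    by (cases "coeff x j"; cases "coeff y j") (simp_all add: vec_of_poly_def vadd_def)
qed

lemma bij_betw_vec_of_poly:
  assumes "0 < k"
  shows "bij_betw vec_of_poly {x. degree x < k} (bvecs k)"
proof (rule bij_betw_imageI)
  show "inj_on vec_of_poly {x. degree x < k}"
  proof (rule inj_onI)
    fix x y assume "vec_of_poly x = vec_of_poly y"
    then have "coeff x j = coeff y j" for j
      by (cases "coeff x j"; cases "coeff y j") (auto simp: vec_of_poly_def dest: fun_cong[of _ _ j])
    then show "x = y" by (rule poly_eqI)
  qed
  show "vec_of_poly ` {x. degree x < k} = bvecs k"
  proof
    show "vec_of_poly ` {x. degree x < k} \<subseteq> bvecs k"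
      by (auto simp: vec_of_poly_def bvecs_def coeff_eq_0)
    show "bvecs k \<subseteq> vec_of_poly ` {x. degree x < k}"
    proof
      fix v assume v: "v \<in> bvecs k"
      define x where "x = Poly (map (\<lambda>j. of_bool (v j) :: bit) [0..<k])"
      have coeff_x: "coeff x j = of_bool (j < k \<and> v j)" for j
        by (simp add: x_def nth_default_def)
      have "degree x \<le> k - 1" by (rule degree_le) (auto simp: coeff_x)
      then have "degree x < k" using assms by linarith
      moreover have "vec_of_poly x = v"
      proof
        fix j show "vec_of_poly x j = v j"
          using v by (cases "j < k") (simp_all add: vec_of_poly_def coeff_x bvecs_def)
      qed
      ultimately show "v \<in> vec_of_poly ` {x. degree x < k}" by blast
    qed
  qed
qed

lemma card_polys_degree_less:
  assumes "0 < k"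
  shows "finite {x :: bit poly. degree x < k}" "card {x :: bit poly. degree x < k} = 2 ^ k"
  using bij_betw_finite[OF bij_betw_vec_of_poly[OF assms]]
    bij_betw_same_card[OF bij_betw_vec_of_poly[OF assms]]
  by (simp_all add: card_bvecs)

lemma inverse_mod_irreducible:
  fixes p d :: "bit poly"
  assumes p: "irreducible p" and d: "d \<noteq> 0" "degree d < degree p"
  shows "\<exists>w. (d * w) mod p = 1"
proof -
  let ?F = "{x :: bit poly. degree x < degree p}"
  have "p \<noteq> 0" "0 < degree p" using p degree_pos_if_irreducible by auto
  have "\<not> p dvd d" using d dvd_imp_degree_le[of p d] by auto
  have "inj_on (\<lambda>w. (d * w) mod p) ?F"
  proof (rule inj_onI)
    fix w w' assume w: "w \<in> ?F" "w' \<in> ?F" and eq: "(d * w) mod p = (d * w') mod p"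
    have "p dvd d * (w - w')" using eq by (simp add: mod_eq_dvd_iff right_diff_distrib)
    then have "p dvd w - w'"
      using field_poly_irreducible_imp_prime[OF p] \<open>\<not> p dvd d\<close> by (simp add: prime_elem_dvd_mult_iff)
    moreover have "degree (w - w') < degree p"
      using w degree_diff_le_max[of w w'] by auto
    ultimately have "w - w' = 0" using dvd_imp_degree_le[of p "w - w'"] by auto
    then show "w = w'" by simp
  qed
  moreover have "(\<lambda>w. (d * w) mod p) ` ?F \<subseteq> ?F"
  proof (rule image_subsetI)
    fix w show "(d * w) mod p \<in> ?F"
      using degree_mod_less[OF \<open>p \<noteq> 0\<close>, of "d * w"] \<open>0 < degree p\<close> by auto
  qed
  ultimately have "(\<lambda>w. (d * w) mod p) ` ?F = ?F"
    using card_polys_degree_less(1)[OF \<open>0 < degree p\<close>] by (intro endo_inj_surj)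
  moreover have "1 \<in> ?F" using \<open>0 < degree p\<close> by simp
  ultimately have "1 \<in> (\<lambda>w. (d * w) mod p) ` ?F" by simp
  then show ?thesis by auto
qed

lemma solve_pair_mod_irreducible:
  fixes p c1 c2 u v :: "bit poly"
  assumes p: "irreducible p" and c: "c1 \<noteq> c2" "degree c1 < degree p" "degree c2 < degree p"
    and u: "degree u < degree p"
  shows "\<exists>x1 x2. degree x1 < degree p \<and> degree x2 < degree p \<and> x1 + x2 = u
    \<and> (c1 * x1) mod p + (c2 * x2) mod p = v mod p"
proof -
  have "p \<noteq> 0" using p by auto
  have "c1 + c2 \<noteq> 0" using c(1) by (metis bit_poly_add_cancel(1) add_0_right)
  moreover have "degree (c1 + c2) < degree p" using c degree_add_le_max[of c1 c2] by auto
  ultimately obtain w where w: "((c1 + c2) * w) mod p = 1"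
    using inverse_mod_irreducible[OF p] by blast
  define x1 where "x1 = (w * (v + c2 * u)) mod p"
  define x2 where "x2 = u + x1"
  have "degree x1 < degree p"
    using degree_mod_less[OF \<open>p \<noteq> 0\<close>, of "w * (v + c2 * u)"] u by (auto simp: x1_def)
  moreover from this have "degree x2 < degree p"
    using u degree_add_le_max[of u x1] by (simp add: x2_def)
  moreover have "x1 + x2 = u" by (simp add: x2_def add.commute)
  moreover have "(c1 * x1) mod p + (c2 * x2) mod p = v mod p"
  proof -
    have "(c1 * x1) mod p + (c2 * x2) mod p = ((c1 + c2) * x1 + c2 * u) mod p"
      by (simp add: x2_def algebra_simps flip: poly_mod_add_left)
    also have "\<dots> = ((c1 + c2) * w * (v + c2 * u) + c2 * u) mod p"
      by (simp add: x1_def poly_mod_add_left mod_mult_right_eq mult.assoc)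
    also have "\<dots> = (((c1 + c2) * w) mod p * (v + c2 * u) + c2 * u) mod p"
      by (simp add: poly_mod_add_left mod_mult_left_eq)
    also have "\<dots> = v mod p" using w by (simp add: add.assoc)
    finally show ?thesis .
  qed
  ultimately show ?thesis by blast
qed

lemma poly_of_list_map_coeff:
  fixes f :: "'a::comm_monoid_add poly"
  assumes "degree f < n"
  shows "poly_of_list (map (coeff f) [0..<n]) = f"
  using assms by (intro poly_eqI) (simp add: poly_of_list_def nth_default_def coeff_eq_0)

lemma irreducible_bit_poly_degree_le_8:
  fixes p :: "bit poly"
  assumes "0 < degree p" "degree p \<le> 8"
    and no_factor: "\<forall>cs\<in>set (List.n_lists 5 [0, 1]).
      0 < degree (poly_of_list cs) \<longrightarrow> p mod poly_of_list cs \<noteq> 0"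
  shows "irreducible p"
proof (rule irreducible_if_no_factor_of_degree_le[where m = 4])
  fix f :: "bit poly" assume f: "0 < degree f" "degree f \<le> 4"
  let ?cs = "map (coeff f) [0..<5]"
  have "set ?cs \<subseteq> {0, 1}" by auto
  then have "?cs \<in> set (List.n_lists 5 [0, 1])" by (simp add: set_n_lists)
  moreover have "poly_of_list ?cs = f" using f(2) by (intro poly_of_list_map_coeff) simp
  ultimately have "p mod f \<noteq> 0" using no_factor f(1) by auto
  then show "\<not> f dvd p" by (simp add: dvd_eq_mod_eq_0)
qed (use assms in simp_all)

lemma irreducible_x6_x_1: "irreducible [:1, 1, 0, 0, 0, 0, 1 :: bit:]"
  and irreducible_x7_x_1: "irreducible [:1, 1, 0, 0, 0, 0, 0, 1 :: bit:]"
  and irreducible_x8_x4_x3_x_1: "irreducible [:1, 1, 0, 1, 1, 0, 0, 0, 1 :: bit:]"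
  by (rule irreducible_bit_poly_degree_le_8; code_simp)+

section \<open>Doubling saturating sets\<close>

definition vconcat :: "nat \<Rightarrow> (nat \<Rightarrow> bool) \<Rightarrow> (nat \<Rightarrow> bool) \<Rightarrow> nat \<Rightarrow> bool" where
  "vconcat t u v = (\<lambda>i. if i < t then u i else v (i - t))"

lemma vadd_vconcat: "vadd (vconcat t u v) (vconcat t u' v') = vconcat t (vadd u u') (vadd v v')"
  by (simp add: vadd_def vconcat_def fun_eq_iff)

lemma vconcat_vzero [simp]: "vconcat t vzero vzero = vzero"
  by (simp add: vconcat_def)

lemma bij_betw_vconcat: "bij_betw (\<lambda>(u, v). vconcat t u v) (bvecs t \<times> bvecs m) (bvecs (t + m))"
proof (rule bij_betw_imageI)
  show "inj_on (\<lambda>(u, v). vconcat t u v) (bvecs t \<times> bvecs m)"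
  proof (rule inj_onI, clarify)
    fix u v u' v' assume u: "u \<in> bvecs t" "u' \<in> bvecs t" and eq: "vconcat t u v = vconcat t u' v'"
    have "u i = u' i" for i
      using u fun_cong[OF eq, of i] by (cases "i < t") (simp_all add: vconcat_def bvecs_def)
    moreover have "v i = v' i" for i using fun_cong[OF eq, of "t + i"] by (simp add: vconcat_def)
    ultimately show "u = u' \<and> v = v'" by auto
  qed
  show "(\<lambda>(u, v). vconcat t u v) ` (bvecs t \<times> bvecs m) = bvecs (t + m)"
  proof
    show "(\<lambda>(u, v). vconcat t u v) ` (bvecs t \<times> bvecs m) \<subseteq> bvecs (t + m)"
      by (auto simp: vconcat_def bvecs_def)
    show "bvecs (t + m) \<subseteq> (\<lambda>(u, v). vconcat t u v) ` (bvecs t \<times> bvecs m)"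
    proof
      fix s assume s: "s \<in> bvecs (t + m)"
      have "s = vconcat t (\<lambda>i. i < t \<and> s i) (\<lambda>i. s (t + i))"
        by (simp add: vconcat_def fun_eq_iff)
      moreover have "(\<lambda>i. i < t \<and> s i) \<in> bvecs t" "(\<lambda>i. s (t + i)) \<in> bvecs m"
        using s by (simp_all add: bvecs_def)
      ultimately show "s \<in> (\<lambda>(u, v). vconcat t u v) ` (bvecs t \<times> bvecs m)" by force
    qed
  qed
qed

definition vec_of_triple :: "nat \<Rightarrow> nat \<Rightarrow> (nat \<Rightarrow> bool) \<times> bit poly \<times> bit poly \<Rightarrow> nat \<Rightarrow> bool" where
  "vec_of_triple t k = (\<lambda>(h, x, y). vconcat t h (vconcat k (vec_of_poly x) (vec_of_poly y)))"

lemma vec_of_triple_add: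
  "vadd (vec_of_triple t k (h, x, y)) (vec_of_triple t k (h', x', y'))
    = vec_of_triple t k (vadd h h', x + x', y + y')"
  by (simp add: vec_of_triple_def vadd_vconcat vec_of_poly_add)

lemma vec_of_triple_zero: "vec_of_triple t k (vzero, 0, 0) = vzero"
  by (simp add: vec_of_triple_def)

lemma bij_betw_vec_of_triple:
  assumes "0 < k"
  shows "bij_betw (vec_of_triple t k) (bvecs t \<times> {x. degree x < k} \<times> {y. degree y < k})
    (bvecs (t + 2 * k))"
proof -
  have "bij_betw ((\<lambda>(u, v). vconcat k u v) \<circ> map_prod vec_of_poly vec_of_poly)
      ({x. degree x < k} \<times> {y. degree y < k}) (bvecs (k + k))"
    using bij_betw_map_prod[OF bij_betw_vec_of_poly[OF assms] bij_betw_vec_of_poly[OF assms]]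
    by (rule bij_betw_trans) (rule bij_betw_vconcat)
  from bij_betw_map_prod[OF bij_betw_id this]
  have "bij_betw ((\<lambda>(u, v). vconcat t u v) \<circ>
      map_prod id ((\<lambda>(u, v). vconcat k u v) \<circ> map_prod vec_of_poly vec_of_poly))
      (bvecs t \<times> {x. degree x < k} \<times> {y. degree y < k}) (bvecs (t + (k + k)))"
    by (rule bij_betw_trans) (rule bij_betw_vconcat)
  moreover have "(\<lambda>(u, v). vconcat t u v) \<circ>
      map_prod id ((\<lambda>(u, v). vconcat k u v) \<circ> map_prod vec_of_poly vec_of_poly) = vec_of_triple t k"
    by (auto simp: vec_of_triple_def)
  ultimately show ?thesis by (simp add: mult_2)
qed

text \<open>Elements of GF(2^k) = F_2[x]/(p) are represented by their remainders, the polynomials of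
  degree less than k; the label \<open>lab b\<close> plays the role of l_b.\<close>

definition doubling_triples ::
  "bit poly \<Rightarrow> ((nat \<Rightarrow> bool) \<Rightarrow> bit poly) \<Rightarrow> (nat \<Rightarrow> bool) set \<Rightarrow> ((nat \<Rightarrow> bool) \<times> bit poly \<times> bit poly) set"
where
  "doubling_triples p lab B =
     {(b, x, (lab b * x) mod p) | b x. b \<in> B \<and> degree x < degree p} \<union>
     {(vzero, x, 0) | x. x \<noteq> 0 \<and> degree x < degree p} \<union>
     {(vzero, 0, y) | y. y \<noteq> 0 \<and> degree y < degree p} \<union>
     {(vzero, x, x) | x. x \<noteq> 0 \<and> degree x < degree p}"

lemma doubling_triples_subset:
  assumes "B \<subseteq> bvecs t" "0 < degree p"
  shows "doubling_triples p lab B \<subseteq> bvecs t \<times> {x. degree x < degree p} \<times> {y. degree y < degree p}"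
proof -
  have "p \<noteq> 0" using assms(2) by auto
  then have "degree ((lab b * x) mod p) < degree p" for b x
    using degree_mod_less[of p "lab b * x"] assms(2) by auto
  then show ?thesis using assms by (auto simp: doubling_triples_def bvecs_def)
qed

lemma card_doubling_triples:
  assumes "finite B" "vzero \<notin> B" "0 < degree p"
  shows "card (doubling_triples p lab B) = card B * 2 ^ degree p + 3 * (2 ^ degree p - 1)"
proof -
  let ?F = "{x :: bit poly. degree x < degree p}"
  let ?Fnz = "?F - {0}"
  define T1 where "T1 = (\<lambda>(b, x). (b, x, (lab b * x) mod p)) ` (B \<times> ?F)"
  define T2 where "T2 = (\<lambda>x. (vzero, x, 0 :: bit poly)) ` ?Fnz"
  define T3 where "T3 = (\<lambda>y. (vzero, 0 :: bit poly, y)) ` ?Fnz"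
  define T4 where "T4 = (\<lambda>x. (vzero, x, x)) ` ?Fnz"
  have "doubling_triples p lab B = T1 \<union> T2 \<union> T3 \<union> T4"
    unfolding doubling_triples_def T1_def T2_def T3_def T4_def by auto
  have fin: "finite ?F" and card_F: "card ?F = 2 ^ degree p"
    using card_polys_degree_less[OF assms(3)] by simp_all
  have card_Fnz: "card ?Fnz = 2 ^ degree p - 1"
    using card_F assms(3) by (simp add: card_Diff_singleton)
  have "finite T1" "finite T2" "finite T3" "finite T4"
    unfolding T1_def T2_def T3_def T4_def using assms(1) fin by simp_all
  moreover have "T1 \<inter> T2 = {}" "T1 \<inter> T3 = {}" "T1 \<inter> T4 = {}" "T2 \<inter> T3 = {}" "T2 \<inter> T4 = {}"
    "T3 \<inter> T4 = {}"
    unfolding T1_def T2_def T3_def T4_def using assms(2) by auto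
  ultimately have "card (doubling_triples p lab B) = card T1 + card T2 + card T3 + card T4"
    using \<open>doubling_triples p lab B = T1 \<union> T2 \<union> T3 \<union> T4\<close>
    by (simp add: card_Un_disjoint Int_Un_distrib2)
  moreover have "card T1 = card B * 2 ^ degree p"
    unfolding T1_def using assms(1) fin card_F
    by (subst card_image) (auto simp: inj_on_def card_cartesian_product)
  moreover have "card T2 = 2 ^ degree p - 1" "card T3 = 2 ^ degree p - 1" "card T4 = 2 ^ degree p - 1"
    unfolding T2_def T3_def T4_def using card_Fnz by (subst card_image; auto simp: inj_on_def)+
  moreover have "(1::nat) \<le> 2 ^ degree p" by simp
  ultimately show ?thesis by linarith
qed

lemma doubling_triples_sum_of_two:
  fixes p :: "bit poly"
  assumes p: "irreducible p" and lab: "inj_on lab B" "\<forall>b\<in>B. degree (lab b) < degree p"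
    and b: "b1 \<in> B" "b2 \<in> B" "b1 \<noteq> b2" and u: "degree u < degree p" and v: "degree v < degree p"
  shows "\<exists>x1 x2. (b1, x1, (lab b1 * x1) mod p) \<in> doubling_triples p lab B
    \<and> (b2, x2, (lab b2 * x2) mod p) \<in> doubling_triples p lab B
    \<and> u = x1 + x2 \<and> v = (lab b1 * x1) mod p + (lab b2 * x2) mod p"
proof -
  have "lab b1 \<noteq> lab b2" using b lab(1) by (auto dest: inj_onD)
  then obtain x1 x2 where x: "degree x1 < degree p" "degree x2 < degree p" "x1 + x2 = u"
      "(lab b1 * x1) mod p + (lab b2 * x2) mod p = v mod p"
    using solve_pair_mod_irreducible[OF p _ _ _ u] b lab(2) by blast
  moreover have "v mod p = v" using v by (rule mod_poly_less)
  ultimately show ?thesis using b by (auto simp: doubling_triples_def)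
qed

lemma doubling_triples_cover:
  fixes p :: "bit poly"
  assumes p: "irreducible p"
    and B: "saturating t B" "inj_on lab B" "\<forall>b\<in>B. degree (lab b) < degree p"
    and h: "h \<in> bvecs t" and u: "degree u < degree p" and v: "degree v < degree p"
  shows "(h, u, v) = (vzero, 0, 0) \<or> (h, u, v) \<in> doubling_triples p lab B \<or>
    (\<exists>h1 x1 y1 h2 x2 y2. (h1, x1, y1) \<in> doubling_triples p lab B
      \<and> (h2, x2, y2) \<in> doubling_triples p lab B \<and> (h, u, v) = (vadd h1 h2, x1 + x2, y1 + y2))"
proof -
  let ?T = "doubling_triples p lab B"
  have "p \<noteq> 0" using p by auto
  have vzero_0_y: "(vzero, 0, y) \<in> ?T" if "y \<noteq> 0" "degree y < degree p" for y
    using that by (simp add: doubling_triples_def)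
  consider "h = vzero" | "h \<in> B" | b1 b2 where "b1 \<in> B" "b2 \<in> B" "b1 \<noteq> b2" "h = vadd b1 b2"
    using B(1) h unfolding saturating_def by fastforce
  then show ?thesis
  proof cases
    case 1
    have "(vzero, u, 0) \<in> ?T" if "u \<noteq> 0" using that u by (simp add: doubling_triples_def)
    then show ?thesis using 1 vzero_0_y[OF _ v] by (cases "u = 0"; cases "v = 0") force+
  next
    case 2
    define w where "w = (lab h * u) mod p"
    have hw: "(h, u, w) \<in> ?T" using 2 u by (auto simp: doubling_triples_def w_def)
    show ?thesis
    proof (cases "v = w")
      case True then show ?thesis using hw by simp
    next
      case False
      then have "v + w \<noteq> 0" by (metis bit_poly_add_cancel(2) add_0)
      moreover have "degree (v + w) < degree p"
        using degree_mod_less[OF \<open>p \<noteq> 0\<close>, of "lab h * u"] v degree_add_le_max[of v w]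
        by (auto simp: w_def)
      ultimately have "(vzero, 0, v + w) \<in> ?T" by (rule vzero_0_y)
      moreover have "(h, u, v) = (vadd h vzero, u + 0, w + (v + w))" by (simp add: add.commute)
      ultimately show ?thesis using hw by blast
    qed
  next
    case 3
    then show ?thesis using doubling_triples_sum_of_two[OF p B(2,3) _ _ _ u v] by blast
  qed
qed

definition doubling ::
  "nat \<Rightarrow> bit poly \<Rightarrow> ((nat \<Rightarrow> bool) \<Rightarrow> bit poly) \<Rightarrow> (nat \<Rightarrow> bool) set \<Rightarrow> (nat \<Rightarrow> bool) set"
where
  "doubling t p lab B = vec_of_triple t (degree p) ` doubling_triples p lab B"

lemma inj_on_vec_of_triple_doubling_triples:
  assumes "B \<subseteq> bvecs t" "0 < degree p"
  shows "inj_on (vec_of_triple t (degree p)) (doubling_triples p lab B)"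
  using bij_betw_imp_inj_on[OF bij_betw_vec_of_triple[OF assms(2)]] doubling_triples_subset[OF assms]
  by (rule inj_on_subset)

lemma doubling_subset_bvecs:
  assumes "B \<subseteq> bvecs t" "0 < degree p"
  shows "doubling t p lab B \<subseteq> bvecs (t + 2 * degree p)"
  using doubling_triples_subset[OF assms] bij_betw_vec_of_triple[OF assms(2), of t]
  by (auto simp: doubling_def bij_betw_def)

lemma finite_doubling:
  assumes "B \<subseteq> bvecs t" "0 < degree p"
  shows "finite (doubling t p lab B)"
  using doubling_subset_bvecs[OF assms] finite_bvecs finite_subset by blast

lemma card_doubling:
  assumes "finite B" "B \<subseteq> bvecs t" "vzero \<notin> B" "0 < degree p"
  shows "card (doubling t p lab B) = card B * 2 ^ degree p + 3 * (2 ^ degree p - 1)"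
  using card_image[OF inj_on_vec_of_triple_doubling_triples[OF assms(2,4)]]
    card_doubling_triples[OF assms(1,3,4)]
  by (simp add: doubling_def)

lemma vzero_notin_doubling:
  assumes "B \<subseteq> bvecs t" "vzero \<notin> B" "0 < degree p"
  shows "vzero \<notin> doubling t p lab B"
proof
  let ?D = "bvecs t \<times> {x. degree x < degree p} \<times> {y. degree y < degree p}"
  assume "vzero \<in> doubling t p lab B"
  then obtain \<tau> where \<tau>: "\<tau> \<in> doubling_triples p lab B"
      "vec_of_triple t (degree p) \<tau> = vec_of_triple t (degree p) (vzero, 0, 0)"
    by (auto simp: doubling_def vec_of_triple_zero)
  moreover have "\<tau> \<in> ?D" using \<tau>(1) doubling_triples_subset[OF assms(1,3)] by blast
  moreover have "(vzero, 0, 0) \<in> ?D" using assms(3) by (simp add: bvecs_def)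
  ultimately have "\<tau> = (vzero, 0, 0)"
    using bij_betw_imp_inj_on[OF bij_betw_vec_of_triple[OF assms(3)]] by (blast dest: inj_onD)
  then show False using \<tau>(1) assms(2) by (auto simp: doubling_triples_def)
qed

lemma doubling_contains_triangle:
  assumes "0 < degree p"
  shows "\<exists>a\<in>doubling t p lab B. \<exists>b\<in>doubling t p lab B. vadd a b \<in> doubling t p lab B"
proof -
  let ?e = "vec_of_triple t (degree p)"
  have "(vzero, 1, 0) \<in> doubling_triples p lab B" "(vzero, 0, 1) \<in> doubling_triples p lab B"
    "(vzero, 1, 1) \<in> doubling_triples p lab B"
    using assms by (simp_all add: doubling_triples_def)
  moreover have "vadd (?e (vzero, 1, 0)) (?e (vzero, 0, 1)) = ?e (vzero, 1, 1)"
    by (simp add: vec_of_triple_add)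
  ultimately show ?thesis unfolding doubling_def by blast
qed

lemma saturating_doubling:
  fixes p :: "bit poly"
  assumes p: "irreducible p"
    and B: "saturating t B" "inj_on lab B" "\<forall>b\<in>B. degree (lab b) < degree p"
  shows "saturating (t + 2 * degree p) (doubling t p lab B)"
  unfolding saturating_def doubling_def
proof
  let ?T = "doubling_triples p lab B" and ?e = "vec_of_triple t (degree p)"
  fix s assume "s \<in> bvecs (t + 2 * degree p)"
  moreover have "0 < degree p" using p by (rule degree_pos_if_irreducible)
  ultimately have "s \<in> ?e ` (bvecs t \<times> {x. degree x < degree p} \<times> {y. degree y < degree p})"
    using bij_betw_vec_of_triple[of "degree p" t] by (simp add: bij_betw_def)
  then obtain h u v where huv: "h \<in> bvecs t" "degree u < degree p" "degree v < degree p"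
      and s: "s = ?e (h, u, v)"
    by auto
  from doubling_triples_cover[OF p B huv]
  show "s = vzero \<or> s \<in> ?e ` ?T \<or> (\<exists>a\<in>?e ` ?T. \<exists>b\<in>?e ` ?T. s = vadd a b)"
  proof (elim disjE exE conjE)
    assume "(h, u, v) = (vzero, 0, 0)"
    then show ?thesis using s vec_of_triple_zero by simp
  next
    assume "(h, u, v) \<in> ?T"
    then show ?thesis using s by blast
  next
    fix h1 x1 y1 h2 x2 y2
    assume "(h1, x1, y1) \<in> ?T" "(h2, x2, y2) \<in> ?T" "(h, u, v) = (vadd h1 h2, x1 + x2, y1 + y2)"
    moreover from this have "s = vadd (?e (h1, x1, y1)) (?e (h2, x2, y2))"
      using s by (simp add: vec_of_triple_add)
    ultimately show ?thesis by blast
  qed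
qed

lemma doubling_length_bound:
  fixes s K t :: nat
  assumes "s \<le> K" "1 \<le> K" "2 \<le> t"
  shows "s * K + 3 * (K - 1) + 1 < 2 ^ t * (K * K)"
proof -
  have "s * K \<le> K * K" using assms(1) by (rule mult_right_mono) simp
  moreover have "3 * (K - 1) + 1 < 3 * (K * K)" using assms(2) by (cases K) auto
  moreover have "(4::nat) \<le> 2 ^ t" using power_increasing[OF assms(3), of "2::nat"] by simp
  then have "4 * (K * K) \<le> 2 ^ t * (K * K)" by (rule mult_right_mono) simp
  ultimately show ?thesis by linarith
qed

lemma code_from_doubling:
  fixes p :: "bit poly"
  assumes p: "irreducible p"
    and B: "finite B" "B \<subseteq> bvecs t" "vzero \<notin> B" "saturating t B"
    and card_B: "card B \<le> 2 ^ degree p" and t: "2 \<le> t"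
  defines "n \<equiv> card B * 2 ^ degree p + 3 * (2 ^ degree p - 1)"
  shows "\<exists>H. is_pc_matrix n (t + 2 * degree p) H \<and> min_dist n (t + 2 * degree p) H = 3
    \<and> covering_radius n (t + 2 * degree p) H = 2"
proof -
  have k: "0 < degree p" using p by (rule degree_pos_if_irreducible)
  have "card B \<le> card {x :: bit poly. degree x < degree p}"
    using card_B by (simp only: card_polys_degree_less(2)[OF k])
  then obtain lab :: "(nat \<Rightarrow> bool) \<Rightarrow> bit poly"
    where lab: "lab ` B \<subseteq> {x. degree x < degree p}" "inj_on lab B"
    using card_le_inj[OF B(1) card_polys_degree_less(1)[OF k]] by blast
  let ?C = "doubling t p lab B"
  have card_C: "card ?C = n" using card_doubling[OF B(1-3) k] by (simp add: n_def)
  have "saturating (t + 2 * degree p) ?C"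
    using p B(4) lab by (intro saturating_doubling) auto
  moreover have "card ?C + 1 < 2 ^ (t + 2 * degree p)"
    using doubling_length_bound[OF card_B _ t] by (simp add: card_C n_def power_add mult_2)
  ultimately have "\<exists>H. is_pc_matrix (card ?C) (t + 2 * degree p) H
      \<and> min_dist (card ?C) (t + 2 * degree p) H = 3
      \<and> covering_radius (card ?C) (t + 2 * degree p) H = 2"
    using finite_doubling[OF B(2) k] doubling_subset_bvecs[OF B(2) k]
      vzero_notin_doubling[OF B(2,3) k] doubling_contains_triangle[OF k]
    by (intro code_from_saturating_set) blast+
  then show ?thesis by (simp only: card_C)
qed

section \<open>A saturating set of 50 vectors of F_2^10\<close>

definition base :: "nat list" where
  "base = [1, 37, 47, 65, 76, 102, 115, 125, 154, 184, 208, 288, 313, 332, 344, 347, 352, 386, 401,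
    434, 436, 452, 459, 473, 520, 537, 540, 572, 600, 621, 627, 640, 662, 666, 680, 708, 724,
    733, 735, 776, 780, 827, 859, 882, 904, 916, 933, 941, 946, 949]"

definition partner :: "nat list" where
  "partner = [
    0, 733, 344, 776, 537, 434, 946, 933, 724, 37, 724, 662, 65, 115, 452, 708, 520, 459, 386,
    332, 102, 640, 332, 941, 288, 640, 102, 904, 452, 621, 941, 540, 916, 154, 401, 1, 0, 916, 65,
    640, 859, 76, 600, 332, 904, 1, 0, 386, 76, 65, 776, 520, 600, 386, 780, 344, 916, 904, 347,
    65, 904, 662, 76, 1, 0, 662, 37, 540, 666, 386, 666, 401, 47, 154, 662, 0, 1, 666, 572, 520,
    572, 47, 776, 640, 401, 37, 780, 37, 313, 401, 386, 47, 640, 666, 640, 827, 313, 313, 47, 37,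
    520, 0, 1, 184, 37, 537, 434, 288, 436, 47, 540, 436, 540, 1, 0, 537, 313, 434, 680, 288, 434,
    776, 288, 1, 0, 780, 436, 776, 344, 347, 537, 780, 600, 540, 332, 332, 827, 540, 313, 600,
    313, 827, 537, 347, 65, 288, 344, 288, 332, 827, 47, 780, 537, 0, 1, 76, 37, 520, 347, 520,
    780, 288, 115, 352, 776, 572, 627, 313, 621, 572, 352, 627, 125, 627, 827, 621, 288, 621, 827,
    540, 47, 102, 627, 0, 1, 776, 313, 572, 776, 780, 37, 882, 540, 600, 540, 537, 125, 537, 882,
    540, 344, 347, 115, 520, 537, 332, 859, 0, 1, 352, 859, 352, 520, 76, 520, 540, 347, 344, 65,
    520, 332, 102, 882, 313, 572, 352, 572, 288, 627, 882, 125, 572, 115, 344, 288, 344, 621, 859,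
    347, 600, 352, 313, 627, 76, 37, 859, 621, 332, 65, 882, 621, 102, 313, 332, 47, 76, 627, 662,
    600, 520, 37, 102, 572, 640, 208, 184, 154, 184, 65, 666, 47, 540, 537, 666, 115, 76, 537, 47,
    76, 154, 65, 65, 208, 37, 125, 662, 621, 0, 1, 537, 662, 662, 125, 125, 540, 115, 184, 102,
    115, 76, 640, 154, 666, 572, 125, 640, 520, 572, 640, 621, 666, 1, 0, 184, 662, 680, 102, 102,
    115, 724, 208, 537, 154, 125, 37, 102, 540, 627, 733, 115, 735, 0, 1, 572, 47, 600, 154, 208,
    115, 600, 733, 621, 735, 0, 1, 1, 0, 724, 125, 154, 102, 0, 1, 208, 47, 208, 621, 724, 572,
    733, 37, 735, 537, 76, 735, 540, 733, 733, 708, 735, 184, 47, 76, 708, 47, 65, 724, 520, 627,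
    184, 37, 37, 627, 520, 184, 0, 1, 735, 65, 733, 76, 76, 572, 65, 208, 640, 537, 572, 724, 1,
    0, 666, 680, 540, 76, 666, 37, 65, 572, 662, 47, 208, 47, 662, 708, 680, 666, 102, 154, 125,
    520, 724, 37, 572, 540, 115, 537, 537, 47, 540, 733, 208, 540, 0, 1, 0, 1, 125, 115, 115, 125,
    154, 640, 537, 520, 47, 102, 621, 115, 154, 65, 0, 1, 627, 115, 621, 125, 1, 0, 600, 662, 76,
    125, 65, 733, 102, 735, 102, 733, 154, 735, 1, 0, 680, 640, 724, 76, 627, 621, 184, 37, 115,
    184, 47, 621, 733, 627, 666, 208, 600, 47, 125, 600, 37, 724, 208, 115, 640, 65, 184, 65, 47,
    102, 76, 621, 154, 627, 37, 600, 76, 125, 115, 436, 313, 344, 208, 401, 436, 434, 0, 1, 386,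
    102, 154, 208, 125, 208, 125, 436, 352, 47, 76, 102, 386, 332, 1, 0, 154, 288, 0, 1, 115, 434,
    436, 76, 184, 401, 401, 125, 434, 47, 288, 347, 344, 115, 65, 37, 184, 386, 386, 313, 65, 47,
    401, 313, 47, 386, 184, 37, 434, 352, 0, 1, 102, 76, 332, 125, 47, 459, 76, 154, 208, 154, 37,
    65, 208, 313, 452, 473, 154, 115, 76, 473, 288, 347, 344, 76, 37, 347, 0, 1, 102, 352, 47, 65,
    154, 459, 347, 125, 313, 344, 125, 184, 459, 184, 352, 452, 115, 473, 1, 0, 102, 115, 76, 452,
    1, 0, 473, 125, 452, 47, 208, 459, 102, 115, 184, 37, 459, 102, 0, 1, 473, 154, 184, 65, 154,
    47, 76, 434, 386, 313, 313, 37, 386, 436, 459, 76, 154, 76, 313, 65, 0, 1, 76, 401, 0, 1, 65,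
    401, 65, 452, 125, 184, 102, 208, 184, 37, 154, 115, 0, 1, 401, 473, 115, 313, 115, 47, 184,
    313, 102, 37, 288, 47, 452, 115, 436, 47, 434, 102, 436, 208, 434, 37, 434, 65, 154, 459, 0,
    1, 436, 459, 452, 208, 401, 184, 76, 352, 102, 347, 344, 473, 352, 347, 0, 1, 76, 65, 208,
    386, 76, 65, 1, 0, 1, 0, 184, 37, 473, 401, 76, 115, 102, 125, 352, 65, 344, 47, 208, 344,
    347, 436, 47, 37, 47, 115, 352, 344, 347, 154, 37, 332, 37, 47, 102, 125, 332, 452, 344, 115,
    386, 347, 473, 313, 473, 401, 0, 1, 184, 401, 0, 1, 154, 125, 452, 401, 154, 352, 47, 184,
    459, 76, 386, 452, 65, 452, 288, 184, 37, 459, 313, 332, 436, 47, 434, 313, 125, 47, 115, 37,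
    386, 344, 184, 37, 436, 154, 184, 313, 434, 65, 436, 344, 347, 154, 352, 288, 1, 0, 288, 102,
    76, 154, 76, 344, 347, 473, 76, 401, 125, 347, 115, 65, 313, 459, 401, 65, 401, 473, 332, 459,
    452, 288, 313, 332, 386, 37, 208, 473, 1, 0, 352, 47, 452, 386, 436, 313, 208, 459, 344, 208,
    434, 347, 352, 436, 102, 436, 452, 434, 102, 434, 332, 125, 0, 1, 47, 125, 434, 76, 288, 352,
    65, 115, 352, 208, 37, 115, 37, 473, 47, 184, 347, 344, 347, 344, 0, 1, 47, 208, 344, 401,
    434, 347, 37, 313, 154, 332, 0, 1, 154, 37, 332, 401, 47, 386, 344, 47, 386, 347, 288, 154,
    208, 313, 1, 0, 459, 47, 436, 452, 473, 434, 1, 0, 434, 313, 184, 37, 0, 1, 1, 0, 288, 452,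
    459, 313, 288, 47, 436, 352, 386, 352, 473, 115, 344, 102, 76, 473, 115, 436, 125, 65, 184,
    102, 332, 347, 344, 125, 125, 473, 459, 102, 102, 65, 115, 459, 76, 436, 332, 347, 208, 452,
    115, 434, 352, 76, 401, 184, 65, 473, 313, 115, 154, 76, 434, 208, 65, 313, 102, 386, 344,
    386, 102, 65, 65, 125, 352, 459, 452, 76, 352, 115, 401, 288, 76, 288]"

fun sums_witnessed :: "nat set \<Rightarrow> nat \<Rightarrow> nat list \<Rightarrow> bool" where
  "sums_witnessed A m [] = True"
| "sums_witnessed A m (a # as) =
    ((if a = 0 then m \<in> A else a \<in> A \<and> xor a m \<in> A) \<and> sums_witnessed A (m + 1) as)"

lemma sums_witnessed_sound:
  assumes "sums_witnessed A m as" "m \<le> x" "x < m + length as"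
  shows "x \<in> A \<or> (\<exists>a\<in>A. xor a x \<in> A)"
  using assms
proof (induction as arbitrary: m)
  case (Cons a as)
  show ?case
  proof (cases "x = m")
    case True then show ?thesis using Cons.prems(1) by (auto split: if_splits)
  next
    case False then show ?thesis using Cons.IH[of "m + 1"] Cons.prems by auto
  qed
qed simp

text \<open>Listing the members lets simp check membership by rewriting instead of searching the list.\<close>

lemma base_members:
  "1 \<in> set base" "37 \<in> set base" "47 \<in> set base" "65 \<in> set base"
  "76 \<in> set base" "102 \<in> set base" "115 \<in> set base" "125 \<in> set base"
  "154 \<in> set base" "184 \<in> set base" "208 \<in> set base" "288 \<in> set base"
  "313 \<in> set base" "332 \<in> set base" "344 \<in> set base" "347 \<in> set base"
  "352 \<in> set base" "386 \<in> set base" "401 \<in> set base" "434 \<in> set base"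
  "436 \<in> set base" "452 \<in> set base" "459 \<in> set base" "473 \<in> set base"
  "520 \<in> set base" "537 \<in> set base" "540 \<in> set base" "572 \<in> set base"
  "600 \<in> set base" "621 \<in> set base" "627 \<in> set base" "640 \<in> set base"
  "662 \<in> set base" "666 \<in> set base" "680 \<in> set base" "708 \<in> set base"
  "724 \<in> set base" "733 \<in> set base" "735 \<in> set base" "776 \<in> set base"
  "780 \<in> set base" "827 \<in> set base" "859 \<in> set base" "882 \<in> set base"
  "904 \<in> set base" "916 \<in> set base" "933 \<in> set base" "941 \<in> set base"
  "946 \<in> set base" "949 \<in> set base"
  by (simp_all add: base_def)

lemma saturating_base: "saturating 10 (bit ` set base)"
  unfolding saturating_def
proof
  fix s assume "s \<in> bvecs 10"
  then obtain m :: nat where m: "m < 1024" "s = bit m" by (auto simp: bvecs_eq_image_bit)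
  \<comment> \<open>Without these deletions simp turns the counter \<open>m + 1\<close> into a tower of \<open>Suc\<close>.\<close>
  have "sums_witnessed (set base) 1 partner"
    by (simp add: partner_def base_members del: One_nat_def add_2_eq_Suc add_2_eq_Suc')
  moreover have "length partner = 1023" by (simp add: partner_def)
  ultimately have "m = 0 \<or> m \<in> set base \<or> (\<exists>a\<in>set base. xor a m \<in> set base)"
    using sums_witnessed_sound[of "set base" 1 partner m] m(1) by linarith
  then show "s = vzero \<or> s \<in> bit ` set base \<or> (\<exists>a\<in>bit ` set base. \<exists>b\<in>bit ` set base. s = vadd a b)"
  proof (elim disjE bexE)
    fix a assume "a \<in> set base" "xor a m \<in> set base"
    moreover have "s = vadd (bit a) (bit (xor a m))" using m(2) by (simp flip: vadd_bit_xor)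
    ultimately show ?thesis by blast
  qed (use m(2) in auto)
qed

lemma base_facts: "distinct base" "length base = 50" "0 \<notin> set base" "\<forall>a\<in>set base. a < 1024"
  by (simp_all add: base_def)

lemma code_from_base:
  fixes p :: "bit poly"
  assumes p: "irreducible p" and k: "6 \<le> degree p"
  shows "\<exists>H. is_pc_matrix (53 * 2 ^ degree p - 3) (10 + 2 * degree p) H
    \<and> min_dist (53 * 2 ^ degree p - 3) (10 + 2 * degree p) H = 3
    \<and> covering_radius (53 * 2 ^ degree p - 3) (10 + 2 * degree p) H = 2"
proof -
  let ?B = "bit ` set base"
  have card_B: "card ?B = 50"
    using base_facts(1,2) by (simp add: card_image inj_on_subset[OF inj_bit_nat] distinct_card)
  have "?B \<subseteq> bvecs 10"
    unfolding bvecs_eq_image_bit using base_facts(4) by (intro image_mono) auto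
  moreover have "vzero \<notin> ?B"
  proof
    assume "vzero \<in> ?B"
    then obtain a where "a \<in> set base" "bit a = vzero" by auto
    then have "a \<in> set base" "a = 0" by (simp_all add: bit_eq_iff)
    then show False using base_facts(3) by simp
  qed
  moreover have "card ?B \<le> 2 ^ degree p"
    using card_B power_increasing[OF k, of "2::nat"] by simp
  moreover have "50 * 2 ^ degree p + 3 * (2 ^ degree p - 1) = 53 * 2 ^ degree p - (3::nat)"
    using one_le_power[of "2::nat" "degree p"] by linarith
  ultimately show ?thesis
    using code_from_doubling[OF p _ _ _ saturating_base] card_B by simp
qed

lemma ell2_le: "is_pc_matrix n r H \<Longrightarrow> covering_radius n r H = R \<Longrightarrow> ell2 r R \<le> n"
  unfolding ell2_def by (rule Least_le) blast

theorem theorem5p5: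
  shows "(\<forall>r \<in> {22, 24, 26::nat}.
            \<exists>H. is_pc_matrix (53 * 2 ^ (r div 2 - 5) - 3) r H
               \<and> min_dist (53 * 2 ^ (r div 2 - 5) - 3) r H = 3
               \<and> covering_radius (53 * 2 ^ (r div 2 - 5) - 3) r H = 2)
       \<and> ell2 22 2 \<le> 3389 \<and> ell2 24 2 \<le> 6781 \<and> ell2 26 2 \<le> 13565"
proof -
  have "\<exists>H. is_pc_matrix 3389 22 H \<and> min_dist 3389 22 H = 3
      \<and> covering_radius 3389 22 H = 2"
    using code_from_base[OF irreducible_x6_x_1] by simp
  moreover have "\<exists>H. is_pc_matrix 6781 24 H \<and> min_dist 6781 24 H = 3
      \<and> covering_radius 6781 24 H = 2"
    using code_from_base[OF irreducible_x7_x_1] by simp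
  moreover have "\<exists>H. is_pc_matrix 13565 26 H \<and> min_dist 13565 26 H = 3
      \<and> covering_radius 13565 26 H = 2"
    using code_from_base[OF irreducible_x8_x4_x3_x_1] by simp
  ultimately show ?thesis by (auto intro: ell2_le)
qed

end
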